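(* Let $\mathcal{R}\subset[0,\infty)$ be a non-empty closed set and $\psi\colon\mathbb{R}\to[0,\infty]$ lower semicontinuous. Then $I\colon\mathbb{R}\to[0,\infty]$ defined by $I(a)=\inf_{\gamma\in\mathcal{R}}[\ell(\gamma;a)+\psi(\gamma)]$ is lower semicontinuous.
   Context: For $\gamma\ge0$: $\ell(\gamma;a)=\infty$ for $a<0$, $\ell(\gamma;0)=\gamma$, and $\ell(\gamma;a)=\gamma-a+a\log(a/\gamma)$ for $a>0$ (interpreted as $\infty$ when $\gamma=0$). *)

theory Defs
  imports "HOL-Analysis.Analysis" "HOL-Library.Extended_Real"
begin

definition lsc :: "(real \<Rightarrow> ereal) \<Rightarrow> bool" where
  "lsc f \<longleftrightarrow> (\<forall>x. f x \<le> Liminf (at x) f)"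

definition ell :: "real \<Rightarrow> real \<Rightarrow> ereal" where
  "ell \<gamma> a =
     (if a < 0 then \<infinity>
      else if a = 0 then ereal \<gamma>
      else if \<gamma> = 0 then \<infinity>
      else ereal (\<gamma> - a + a * ln (a / \<gamma>)))"

end

theory Submission
  imports Defs
begin

text \<open>For \<gamma> \<ge> 0 the rate function is the supremum over s > 0 of the affine functions
  (1 - s) \<gamma> + a ln s (by ln x \<le> x - 1, with equality at s = a / \<gamma>), hence jointly lower
  semicontinuous in (\<gamma>, a), and so is \<ell>(\<gamma>; a) + \<psi>(\<gamma>). The choice s = 1/2 gives
  \<ell>(\<gamma>; a) \<ge> \<gamma>/2 - |a|, so if a_n \<rightarrow> a and I(a_n) < r, the near-optimal \<gamma>_n \<in> R stay
  bounded; a subsequence converges to some \<gamma> \<in> R, and lower semicontinuity gives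
  I(a) \<le> \<ell>(\<gamma>; a) + \<psi>(\<gamma>) \<le> r. So the sublevel sets of I are closed.\<close>

lemma lsc_imp_eventually_greater:
  assumes "lsc f" "c < f x"
  shows "\<forall>\<^sub>F y in nhds x. c < f y"
proof -
  have "f x \<le> Liminf (at x) f"
    using assms(1) by (simp add: lsc_def)
  then show ?thesis
    using assms(2) unfolding eventually_nhds_conv_at le_Liminf_iff by blast
qed

lemma lsc_le_Liminf_comp:
  assumes "lsc f" "(g \<longlongrightarrow> x) F"
  shows "f x \<le> Liminf F (\<lambda>t. f (g t))"
  unfolding le_Liminf_iff
proof (intro allI impI)
  fix c assume "c < f x"
  then show "\<forall>\<^sub>F t in F. c < f (g t)"
    using assms by (intro eventually_compose_filterlim[OF lsc_imp_eventually_greater]) auto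
qed

lemma lsc_if_closed_sublevels:
  assumes "\<And>c. closed {x. f x \<le> c}"
  shows "lsc f"
  unfolding lsc_def le_Liminf_iff
proof (intro allI impI)
  fix x c assume "c < f x"
  moreover have "open {y. \<not> f y \<le> c}"
    using assms by (simp add: open_closed Collect_neg_eq)
  ultimately have "\<forall>\<^sub>F y in nhds x. \<not> f y \<le> c"
    using eventually_nhds_in_open[of "{y. \<not> f y \<le> c}" x] by (simp add: not_le)
  then show "\<forall>\<^sub>F y in at x. c < f y"
    by (simp add: eventually_nhds_conv_at not_le)
qed

lemma ell_ge_affine:
  assumes "\<gamma> \<ge> 0" "s > 0"
  shows "ereal ((1 - s) * \<gamma> + a * ln s) \<le> ell \<gamma> a"
proof -
  consider "a < 0" | "a = 0" | "a > 0" "\<gamma> = 0" | "a > 0" "\<gamma> > 0"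
    using assms by linarith
  then show ?thesis
  proof cases
    case 2
    have "(1 - s) * \<gamma> \<le> 1 * \<gamma>"
      using assms by (intro mult_right_mono) auto
    then show ?thesis using 2 by (simp add: ell_def)
  next
    case 4
    have "a * ln (s * \<gamma> / a) \<le> a * (s * \<gamma> / a - 1)"
      using 4 assms by (intro mult_left_mono ln_le_minus_one) auto
    also have "\<dots> = s * \<gamma> - a"
      using 4 by (simp add: field_simps)
    finally have "a * ln (s * \<gamma> / a) \<le> s * \<gamma> - a" .
    moreover have "a * ln (s * \<gamma> / a) = a * ln s - a * ln (a / \<gamma>)"
      using 4 assms by (simp add: ln_div ln_mult distrib_left right_diff_distrib)
    ultimately have "(1 - s) * \<gamma> + a * ln s \<le> \<gamma> - a + a * ln (a / \<gamma>)"
      by (simp add: algebra_simps)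
    then show ?thesis
      using 4 by (simp add: ell_def)
  qed (auto simp: ell_def)
qed

lemma ell_nonneg: "\<gamma> \<ge> 0 \<Longrightarrow> ell \<gamma> a \<ge> 0"
  using ell_ge_affine[of \<gamma> 1 a] by (simp add: zero_ereal_def[symmetric])

lemma ell_ge_half_minus_abs:
  assumes "\<gamma> \<ge> 0"
  shows "ereal (\<gamma> / 2 - \<bar>a\<bar>) \<le> ell \<gamma> a"
proof -
  have "\<bar>a * ln 2\<bar> \<le> \<bar>a\<bar> * 1"
    unfolding abs_mult using ln_2_less_1 by (intro mult_left_mono) auto
  then have "\<gamma> / 2 - \<bar>a\<bar> \<le> (1 - 1 / 2) * \<gamma> + a * ln (1 / 2)"
    by (simp add: ln_div)
  then have "ereal (\<gamma> / 2 - \<bar>a\<bar>) \<le> ereal ((1 - 1 / 2) * \<gamma> + a * ln (1 / 2))"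
    by (simp only: ereal_less_eq)
  also have "\<dots> \<le> ell \<gamma> a"
    using assms by (intro ell_ge_affine) auto
  finally show ?thesis .
qed

lemma less_ell_imp_less_affine:
  assumes "\<gamma> \<ge> 0" "ereal c < ell \<gamma> a"
  shows "\<exists>s>0. c < (1 - s) * \<gamma> + a * ln s"
proof -
  consider "a < 0" | "a = 0" | "a > 0" "\<gamma> = 0" | "a > 0" "\<gamma> > 0"
    using assms by linarith
  then show ?thesis
  proof cases
    case 1
    define t where "t = (\<bar>c\<bar> + 1) / a"
    have "t < 0" "a * t = \<bar>c\<bar> + 1"
      using 1 by (simp_all add: t_def divide_pos_neg)
    moreover have "(1 - exp t) * \<gamma> \<ge> 0"
      using \<open>t < 0\<close> assms(1) by simp
    ultimately have "c < (1 - exp t) * \<gamma> + a * ln (exp t)"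
      by simp
    then show ?thesis
      by (intro exI[of _ "exp t"]) simp
  next
    case 2
    then have "c < \<gamma>"
      using assms by (simp add: ell_def)
    define s where "s = (\<gamma> - c) / (2 * (\<gamma> + 1))"
    have "s * \<gamma> = (\<gamma> - c) * (\<gamma> / (2 * (\<gamma> + 1)))"
      by (simp add: s_def)
    also have "\<dots> < (\<gamma> - c) * 1"
      using \<open>c < \<gamma>\<close> assms(1) by (intro mult_strict_left_mono) (auto simp: field_simps)
    finally have "s * \<gamma> < \<gamma> - c"
      by simp
    moreover have "s > 0"
      using \<open>c < \<gamma>\<close> assms(1) by (simp add: s_def)
    ultimately show ?thesis
      using 2 by (intro exI[of _ s]) (simp add: algebra_simps)
  next
    case 3
    show ?thesis
      using 3 by (intro exI[of _ "exp ((\<bar>c\<bar> + 1) / a)"]) simp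
  next
    case 4
    then have "c < \<gamma> - a + a * ln (a / \<gamma>)"
      using assms by (simp add: ell_def)
    then show ?thesis
      using 4 by (intro exI[of _ "a / \<gamma>"]) (simp add: algebra_simps)
  qed
qed

lemma ell_le_Liminf:
  assumes "(A \<longlongrightarrow> a) F" "(G \<longlongrightarrow> \<gamma>) F" "\<forall>\<^sub>F t in F. G t \<ge> 0" "\<gamma> \<ge> 0"
  shows "ell \<gamma> a \<le> Liminf F (\<lambda>t. ell (G t) (A t))"
  unfolding le_Liminf_iff
proof (intro allI impI)
  fix c assume "c < ell \<gamma> a"
  then obtain r where r: "c < ereal r" "ereal r < ell \<gamma> a"
    using ereal_dense2 by blast
  then obtain s where s: "s > 0" "r < (1 - s) * \<gamma> + a * ln s"
    using less_ell_imp_less_affine assms(4) by blast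
  have "((\<lambda>t. (1 - s) * G t + A t * ln s) \<longlongrightarrow> (1 - s) * \<gamma> + a * ln s) F"
    using assms(1,2) by (intro tendsto_intros)
  then have "\<forall>\<^sub>F t in F. r < (1 - s) * G t + A t * ln s"
    using s(2) by (rule order_tendstoD)
  with assms(3) show "\<forall>\<^sub>F t in F. c < ell (G t) (A t)"
  proof eventually_elim
    case (elim t)
    then have "ereal r < ereal ((1 - s) * G t + A t * ln s)"
      by simp
    also have "\<dots> \<le> ell (G t) (A t)"
      using elim s(1) by (intro ell_ge_affine) auto
    finally have "ereal r < ell (G t) (A t)" .
    with r(1) show ?case by simp
  qed
qed

lemma ell_plus_le_Liminf:
  assumes "F \<noteq> bot" "(A \<longlongrightarrow> a) F" "(G \<longlongrightarrow> \<gamma>) F" "\<forall>\<^sub>F t in F. G t \<ge> 0" "\<gamma> \<ge> 0"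
    and "\<And>x. \<psi> x \<ge> 0" "lsc \<psi>"
  shows "ell \<gamma> a + \<psi> \<gamma> \<le> Liminf F (\<lambda>t. ell (G t) (A t) + \<psi> (G t))"
proof -
  have "ell \<gamma> a + \<psi> \<gamma> \<le> Liminf F (\<lambda>t. ell (G t) (A t)) + Liminf F (\<lambda>t. \<psi> (G t))"
    using assms by (intro add_mono ell_le_Liminf lsc_le_Liminf_comp)
  also have "\<dots> \<le> Liminf F (\<lambda>t. ell (G t) (A t) + \<psi> (G t))"
    using assms(1,4,6) by (intro Liminf_add_le) (auto elim: eventually_mono intro: ell_nonneg)
  finally show ?thesis .
qed

lemma INF_ell_plus_le_of_tendsto:
  assumes "closed R" "R \<subseteq> {0..}" "\<And>x. \<psi> x \<ge> 0" "lsc \<psi>"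
    and "A \<longlonglongrightarrow> a" "\<And>n. (INF \<gamma>\<in>R. ell \<gamma> (A n) + \<psi> \<gamma>) < ereal r"
  shows "(INF \<gamma>\<in>R. ell \<gamma> a + \<psi> \<gamma>) \<le> ereal r"
proof -
  have "\<forall>n. \<exists>\<gamma>. \<gamma> \<in> R \<and> ell \<gamma> (A n) + \<psi> \<gamma> < ereal r"
    using assms(6) by (auto simp: INF_less_iff)
  then obtain G where G: "\<And>n. G n \<in> R" "\<And>n. ell (G n) (A n) + \<psi> (G n) \<le> ereal r"
    by (metis less_imp_le)
  have G_nonneg: "G n \<ge> 0" for n
    using assms(2) G(1) by auto
  obtain B where B: "\<And>n. \<bar>A n\<bar> \<le> B"
    using convergent_imp_bounded[OF assms(5)] by (auto simp: bounded_real)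
  have G_le: "G n \<le> 2 * (r + B)" for n
  proof -
    have "ereal (G n / 2 - \<bar>A n\<bar>) \<le> ell (G n) (A n) + \<psi> (G n)"
      using ell_ge_half_minus_abs[OF G_nonneg] assms(3) by (intro add_increasing2) auto
    with G(2)[of n] have "G n / 2 - \<bar>A n\<bar> \<le> r"
      by (meson ereal_less_eq(3) order_trans)
    with B[of n] show ?thesis
      by (simp add: field_simps)
  qed
  have "bounded (range G)"
    by (rule bounded_subset[of "{0 .. 2 * (r + B)}"]) (use G_nonneg G_le in auto)
  then obtain l \<sigma> where \<sigma>: "strict_mono \<sigma>" "(G \<circ> \<sigma>) \<longlonglongrightarrow> l"
    using bounded_imp_convergent_subsequence by blast
  have "l \<in> R"
    using closed_sequentially[OF assms(1) _ \<sigma>(2)] G(1) by simp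
  then have "(INF \<gamma>\<in>R. ell \<gamma> a + \<psi> \<gamma>) \<le> ell l a + \<psi> l"
    by (rule INF_lower)
  also have "\<dots> \<le> Liminf sequentially (\<lambda>n. ell (G (\<sigma> n)) (A (\<sigma> n)) + \<psi> (G (\<sigma> n)))"
    using \<sigma> \<open>l \<in> R\<close> assms(2-5) G_nonneg
    by (intro ell_plus_le_Liminf) (auto simp: LIMSEQ_subseq_LIMSEQ[unfolded comp_def] comp_def)
  also have "\<dots> \<le> ereal r"
    using G(2) by (intro Liminf_le) auto
  finally show ?thesis .
qed

theorem proposition7:
  fixes R :: "real set" and \<psi> :: "real \<Rightarrow> ereal"
  assumes "R \<noteq> {}" and "closed R" and "R \<subseteq> {0..}"
    and "\<And>x. \<psi> x \<ge> 0" and "lsc \<psi>"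
  shows "lsc (\<lambda>a. INF \<gamma>\<in>R. ell \<gamma> a + \<psi> \<gamma>)"
proof (rule lsc_if_closed_sublevels)
  fix c :: ereal
  let ?I = "\<lambda>a. INF \<gamma>\<in>R. ell \<gamma> a + \<psi> \<gamma>"
  show "closed {a. ?I a \<le> c}"
    unfolding closed_sequential_limits
  proof (intro allI impI, elim conjE)
    fix A a assume A: "\<forall>n. A n \<in> {a. ?I a \<le> c}" "A \<longlonglongrightarrow> a"
    show "a \<in> {a. ?I a \<le> c}"
    proof (rule ccontr)
      assume "a \<notin> {a. ?I a \<le> c}"
      then obtain r where "c < ereal r" "ereal r < ?I a"
        using ereal_dense2 by (auto simp: not_le)
      moreover from \<open>c < ereal r\<close> have "?I (A n) < ereal r" for n
        using A(1) by (meson mem_Collect_eq order.strict_trans1)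
      then have "?I a \<le> ereal r"
        by (rule INF_ell_plus_le_of_tendsto[OF assms(2-5) A(2)])
      ultimately show False
        by simp
    qed
  qed
qed

end
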